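(* Let $\mathcal{D}$ be a set of Borel probability distributions on $\mathbb{R}^n$, $(\Theta,\rho)$ a metric space, $\theta:\mathcal D\to\Theta$, $\tau>0$, $\varepsilon>0$, $\alpha\in[0,1)$. Any randomized SQ algorithm estimating $\theta(D)$ over $\mathcal{D}$ with precision $\varepsilon$ and probability of success at least $1-\alpha$ must make at least $$q\ge\frac{\log\big((1-\alpha)\,\mathrm{pk}_{(\theta(\mathcal D),\rho)}(\varepsilon)\big)}{\log(1+\lfloor1/\tau\rfloor)}$$ queries to $\mathrm{STAT}(\tau)$, where $\theta(\mathcal D)=\{\theta(D):D\in\mathcal D\}$.
   Context: For $\mathcal{M}\subseteq\Theta$, an $\varepsilon$-packing of $\mathcal M$ is a subset $\{\theta_1,\dots,\theta_k\}\subseteq\mathcal M$ with $\rho(\theta_i,\theta_j)>2\varepsilon$ for all $i\neq j$; $\mathrm{pk}_{(\mathcal M,\rho)}(\varepsilon)$ is the largest cardinality of such a packing (possibly infinite). SQ framework: a $\mathrm{STAT}(\tau)$ oracle for $D$ answers each measurable query $r:\mathbb{R}^n\to[-1,1]$ with an arbitrary adversarial real $a$ (possibly depending on previous queries) with $|a-\mathbb{E}_D[r]|\le\tau$. A deterministic SQ algorithm making $q$ queries chooses each query as a function of previous answers and outputs an element of $\Theta$ that is a function of all $q$ answers. A randomized SQ algorithm is a probability distribution over deterministic SQ algorithms making $q$ queries; it estimates $\theta$ over $\mathcal{D}$ with precision $\varepsilon$ and probability of success $1-\alpha$ if for every $D\in\mathcal D$ and every valid $\mathrm{STAT}(\tau)$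 oracle for $D$, with probability at least $1-\alpha$ its output $\hat\theta$ satisfies $\rho(\theta(D),\hat\theta)\le\varepsilon$. *)

theory Defs
  imports "HOL-Probability.Probability"
begin

definition valid_query :: "(real^'n \<Rightarrow> real) \<Rightarrow> bool" where
  "valid_query r \<longleftrightarrow> r \<in> borel_measurable borel \<and> (\<forall>x. \<bar>r x\<bar> \<le> 1)"

text \<open>A STAT(tau) oracle for D: the answer to the current query (the last element of the
  list of queries asked so far) may depend adversarially on the whole query history,
  but must be within tau of the true expectation.\<close>

definition stat_oracle :: "real \<Rightarrow> (real^'n) measure \<Rightarrow> ((real^'n \<Rightarrow> real) list \<Rightarrow> real) \<Rightarrow> bool" where
  "stat_oracle \<tau> D Orc \<longleftrightarrow>
     (\<forall>hs. hs \<noteq> [] \<longrightarrow> valid_query (last hs) \<longrightarrow>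
        \<bar>Orc hs - (\<integral>x. last hs x \<partial>D)\<bar> \<le> \<tau>)"

text \<open>A deterministic adaptive SQ algorithm is given by a query-choice function Q
  (next query as a function of the answers received so far) and an output function out
  (applied to all q answers).\<close>

fun sq_run :: "(real list \<Rightarrow> (real^'n \<Rightarrow> real)) \<Rightarrow> ((real^'n \<Rightarrow> real) list \<Rightarrow> real) \<Rightarrow> nat \<Rightarrow> real list" where
  "sq_run Q Orc 0 = []"
| "sq_run Q Orc (Suc k) =
     (let as = sq_run Q Orc k in as @ [Orc (map (\<lambda>j. Q (take j as)) [0..<Suc k])])"

definition det_sq_alg :: "nat \<Rightarrow> 'b set \<Rightarrow> (real list \<Rightarrow> (real^'n \<Rightarrow> real)) \<Rightarrow> (real list \<Rightarrow> 'b) \<Rightarrow> bool" where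
  "det_sq_alg q \<Theta> Q out \<longleftrightarrow>
     (\<forall>as. length as < q \<longrightarrow> valid_query (Q as)) \<and> (\<forall>as. out as \<in> \<Theta>)"

text \<open>A randomized SQ algorithm making q queries: a probability space P together with a
  map A from sample points to deterministic SQ algorithms making q queries. It estimates
  theta over the family with precision eps and success probability 1 - alpha if for every
  D in the family and every valid STAT(tau) oracle for D, the success event has
  (inner) probability at least 1 - alpha, i.e. contains a measurable set of probability
  at least 1 - alpha.\<close>

definition rand_sq_estimates ::
  "nat \<Rightarrow> real \<Rightarrow> 'b set \<Rightarrow> ('b \<Rightarrow> 'b \<Rightarrow> real) \<Rightarrow> (real^'n) measure set \<Rightarrow> ((real^'n) measure \<Rightarrow> 'b)
   \<Rightarrow> real \<Rightarrow> real \<Rightarrow> 'c measure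
   \<Rightarrow> ('c \<Rightarrow> (real list \<Rightarrow> (real^'n \<Rightarrow> real)) \<times> (real list \<Rightarrow> 'b)) \<Rightarrow> bool" where
  "rand_sq_estimates q \<tau> \<Theta> \<rho> \<D> \<theta> \<epsilon> \<alpha> P A \<longleftrightarrow>
     prob_space P \<and>
     (\<forall>c\<in>space P. det_sq_alg q \<Theta> (fst (A c)) (snd (A c))) \<and>
     (\<forall>D\<in>\<D>. \<forall>Orc. stat_oracle \<tau> D Orc \<longrightarrow>
        (\<exists>S\<in>sets P. S \<subseteq> {c\<in>space P. \<rho> (\<theta> D) (snd (A c) (sq_run (fst (A c)) Orc q)) \<le> \<epsilon>}
                   \<and> 1 - \<alpha> \<le> measure P S))"

text \<open>Packing number: supremum (in enat) of cardinalities of eps-packings; it is infinity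
  iff there are arbitrarily large (in particular, infinite) packings.\<close>

definition is_packing :: "'b set \<Rightarrow> ('b \<Rightarrow> 'b \<Rightarrow> real) \<Rightarrow> real \<Rightarrow> 'b set \<Rightarrow> bool" where
  "is_packing M \<rho> \<epsilon> S \<longleftrightarrow> S \<subseteq> M \<and> (\<forall>x\<in>S. \<forall>y\<in>S. x \<noteq> y \<longrightarrow> \<rho> x y > 2 * \<epsilon>)"

definition packing_number :: "'b set \<Rightarrow> ('b \<Rightarrow> 'b \<Rightarrow> real) \<Rightarrow> real \<Rightarrow> enat" where
  "packing_number M \<rho> \<epsilon> = Sup {enat (card S) | S. finite S \<and> is_packing M \<rho> \<epsilon> S}"

end

theory Submission imports Defs begin

text \<open>The STAT(\<tau>) oracle that rounds every true expectation to the grid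
  -1 + \<tau>, -1 + 3\<tau>, \<dots> of 1 + \<lfloor>1/\<tau>\<rfloor> points is valid for every distribution, so a
  deterministic SQ algorithm facing it sees at most (1 + \<lfloor>1/\<tau>\<rfloor>)^q transcripts and thus
  produces at most that many outputs. By the triangle inequality, one output is \<epsilon>-close to at
  most one point of an \<epsilon>-packing of \<theta>(\<D>). Choosing one distribution per packing point and
  summing the success probabilities over the packing, double counting gives
  (1 - \<alpha>) \<cdot> |packing| \<le> (1 + \<lfloor>1/\<tau>\<rfloor>)^q; in particular the packing number is finite.\<close>

text \<open>Rounding to the midpoint of the cell of width 2\<tau> containing x; the min only matters
  for x > 1 and keeps every value on the finite grid.\<close>

definition grid_round :: "real \<Rightarrow> real \<Rightarrow> real" where
  "grid_round \<tau> x = -1 + \<tau> + 2 * \<tau> * real (min (nat \<lfloor>1/\<tau>\<rfloor>) (nat \<lfloor>(x + 1) / (2 * \<tau>)\<rfloor>))"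

definition round_grid :: "real \<Rightarrow> real set" where
  "round_grid \<tau> = (\<lambda>k. -1 + \<tau> + 2 * \<tau> * real k) ` {..nat \<lfloor>1/\<tau>\<rfloor>}"

lemma grid_round_in_round_grid: "grid_round \<tau> x \<in> round_grid \<tau>"
  unfolding grid_round_def round_grid_def by auto

lemma finite_round_grid: "finite (round_grid \<tau>)"
  unfolding round_grid_def by simp

lemma card_round_grid_le: "card (round_grid \<tau>) \<le> Suc (nat \<lfloor>1/\<tau>\<rfloor>)"
  unfolding round_grid_def by (metis card_atMost card_image_le finite_atMost)

lemma grid_round_close:
  assumes "\<tau> > 0" "\<bar>x\<bar> \<le> 1"
  shows "\<bar>grid_round \<tau> x - x\<bar> \<le> \<tau>"
proof -
  define t where "t = (x + 1) / (2 * \<tau>)"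
  have "0 \<le> t" "t \<le> 1/\<tau>"
    using assms by (simp_all add: t_def field_simps)
  then have "0 \<le> \<lfloor>t\<rfloor>" "\<lfloor>t\<rfloor> \<le> \<lfloor>1/\<tau>\<rfloor>"
    by (simp_all add: floor_mono)
  then have rounded: "grid_round \<tau> x = -1 + \<tau> + 2 * \<tau> * of_int \<lfloor>t\<rfloor>"
    by (simp add: grid_round_def t_def[symmetric] min_absorb2 nat_mono)
  have "x = 2 * \<tau> * t - 1"
    using assms by (simp add: t_def field_simps)
  then have diff: "grid_round \<tau> x - x = \<tau> * (1 - 2 * (t - of_int \<lfloor>t\<rfloor>))"
    unfolding rounded by (simp add: algebra_simps)
  have "0 \<le> t - of_int \<lfloor>t\<rfloor>" "t - of_int \<lfloor>t\<rfloor> \<le> 1"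
    using of_int_floor_le[of t] real_of_int_floor_add_one_gt[of t] by linarith+
  then have "\<bar>1 - 2 * (t - of_int \<lfloor>t\<rfloor>)\<bar> \<le> 1"
    by (simp add: abs_le_iff)
  then show ?thesis
    using assms(1) by (simp add: diff abs_mult mult_left_le)
qed

lemma abs_integral_valid_query_le_1:
  fixes D :: "(real^'n) measure"
  assumes "prob_space D" "sets D = sets borel" "valid_query r"
  shows "\<bar>\<integral>x. r x \<partial>D\<bar> \<le> 1"
proof -
  interpret prob_space D by fact
  have bound: "\<And>x. \<bar>r x\<bar> \<le> 1"
    using assms(3) by (simp add: valid_query_def)
  have "r \<in> borel_measurable D"
    using assms(3) by (subst measurable_cong_sets[OF assms(2) refl]) (simp add: valid_query_def)
  then have "integrable D r"
    using bound by (intro integrable_const_bound[where B = 1]) auto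
  then have "\<bar>\<integral>x. r x \<partial>D\<bar> \<le> (\<integral>x. 1 \<partial>D)"
    using bound by (intro integral_abs_bound_integral) auto
  then show ?thesis
    by (simp add: prob_space)
qed

lemma stat_oracle_grid_round:
  fixes D :: "(real^'n) measure"
  assumes "prob_space D" "sets D = sets borel" "\<tau> > 0"
  shows "stat_oracle \<tau> D (\<lambda>hs. grid_round \<tau> (\<integral>x. last hs x \<partial>D))"
  using grid_round_close[OF assms(3) abs_integral_valid_query_le_1[OF assms(1,2)]]
  by (simp add: stat_oracle_def)

lemma sq_run_in_lists:
  "sq_run Q Orc k \<in> {as. set as \<subseteq> range Orc \<and> length as = k}"
  by (induction k) (auto simp: Let_def)

lemma packing_point_unique:
  assumes "Metric_space \<Theta> \<rho>" "is_packing M \<rho> \<epsilon> S" "M \<subseteq> \<Theta>" "y \<in> \<Theta>"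
    and "s \<in> S" "s' \<in> S" "\<rho> s y \<le> \<epsilon>" "\<rho> s' y \<le> \<epsilon>"
  shows "s = s'"
proof (rule ccontr)
  assume "s \<noteq> s'"
  then have "2 * \<epsilon> < \<rho> s s'"
    using assms(2,5,6) by (simp add: is_packing_def)
  moreover have "s \<in> \<Theta>" "s' \<in> \<Theta>"
    using assms(2,3,5,6) by (auto simp: is_packing_def)
  then have "\<rho> s s' \<le> \<rho> s y + \<rho> s' y"
    using Metric_space.triangle'[OF assms(1)] assms(4) by blast
  ultimately show False
    using assms(7,8) by linarith
qed

lemma card_sq_successes_le:
  assumes "Metric_space \<Theta> \<rho>" "is_packing M \<rho> \<epsilon> S" "M \<subseteq> \<Theta>"
    and "finite G" "\<And>s. range (Orc s) \<subseteq> G" "\<And>as. out as \<in> \<Theta>"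
  shows "card {s\<in>S. \<rho> s (out (sq_run Q (Orc s) q)) \<le> \<epsilon>} \<le> card G ^ q"
proof -
  let ?L = "{as. set as \<subseteq> G \<and> length as = q}"
  have "card {s\<in>S. \<rho> s (out (sq_run Q (Orc s) q)) \<le> \<epsilon>} \<le> card ?L"
  proof (rule card_inj_on_le)
    show "inj_on (\<lambda>s. sq_run Q (Orc s) q) {s\<in>S. \<rho> s (out (sq_run Q (Orc s) q)) \<le> \<epsilon>}"
      using packing_point_unique[OF assms(1-3) assms(6)] by (auto intro: inj_onI)
    show "(\<lambda>s. sq_run Q (Orc s) q) ` {s\<in>S. \<rho> s (out (sq_run Q (Orc s) q)) \<le> \<epsilon>} \<subseteq> ?L"
      using sq_run_in_lists assms(5) by blast
    show "finite ?L"
      using assms(4) finite_lists_length_eq by blast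
  qed
  then show ?thesis
    by (simp add: card_lists_length_eq[OF assms(4)])
qed

lemma (in prob_space) sum_prob_le_of_bounded_overlap:
  assumes "finite S" "\<And>s. s \<in> S \<Longrightarrow> T s \<in> events"
    and "\<And>c. c \<in> space M \<Longrightarrow> card {s\<in>S. c \<in> T s} \<le> N"
  shows "(\<Sum>s\<in>S. prob (T s)) \<le> N"
proof -
  have int: "integrable M (indicator (T s) :: 'a \<Rightarrow> real)" if "s \<in> S" for s
    using assms(2)[OF that] by (simp add: less_top[symmetric])
  have overlap: "(\<Sum>s\<in>S. indicator (T s) c) \<le> real N" if "c \<in> space M" for c
  proof -
    have "(\<Sum>s\<in>S. indicator (T s) c :: real) = (\<Sum>s\<in>{s\<in>S. c \<in> T s}. 1)"
      using assms(1) by (simp add: indicator_def sum.inter_filter Int_def)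
    then show ?thesis
      using assms(3)[OF that] by simp
  qed
  have "(\<Sum>s\<in>S. prob (T s)) = (\<Sum>s\<in>S. \<integral>c. indicator (T s) c \<partial>M)"
    using assms(2) by (intro sum.cong) auto
  also have "\<dots> = (\<integral>c. (\<Sum>s\<in>S. indicator (T s) c) \<partial>M)"
    using int by (rule Bochner_Integration.integral_sum[symmetric])
  also have "\<dots> \<le> (\<integral>c. real N \<partial>M)"
    using int overlap by (intro integral_mono) auto
  finally show ?thesis
    by (simp add: prob_space)
qed

lemma rand_sq_estimates_success_event:
  assumes "rand_sq_estimates q \<tau> \<Theta> \<rho> \<D> \<theta> \<epsilon> \<alpha> P A" "D \<in> \<D>" "stat_oracle \<tau> D Orc"
  shows "\<exists>T\<in>sets P. T \<subseteq> {c\<in>space P. \<rho> (\<theta> D) (snd (A c) (sq_run (fst (A c)) Orc q)) \<le> \<epsilon>}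
    \<and> 1 - \<alpha> \<le> measure P T"
proof -
  have "\<forall>D\<in>\<D>. \<forall>Orc. stat_oracle \<tau> D Orc \<longrightarrow>
      (\<exists>T\<in>sets P. T \<subseteq> {c\<in>space P. \<rho> (\<theta> D) (snd (A c) (sq_run (fst (A c)) Orc q)) \<le> \<epsilon>}
        \<and> 1 - \<alpha> \<le> measure P T)"
    using assms(1) by (simp add: rand_sq_estimates_def)
  then show ?thesis
    using assms(2,3) by blast
qed

lemma rand_sq_estimates_packing_bound:
  fixes \<D> :: "(real^'n) measure set" and \<theta> :: "(real^'n) measure \<Rightarrow> 'b"
    and A :: "'c \<Rightarrow> (real list \<Rightarrow> (real^'n \<Rightarrow> real)) \<times> (real list \<Rightarrow> 'b)"
  assumes "\<forall>D\<in>\<D>. prob_space D \<and> sets D = sets borel" "Metric_space \<Theta> \<rho>" "\<theta> ` \<D> \<subseteq> \<Theta>"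
    and "\<tau> > 0" "rand_sq_estimates q \<tau> \<Theta> \<rho> \<D> \<theta> \<epsilon> \<alpha> P A"
    and "finite S" "is_packing (\<theta> ` \<D>) \<rho> \<epsilon> S"
  shows "(1 - \<alpha>) * real (card S) \<le> real (Suc (nat \<lfloor>1/\<tau>\<rfloor>)) ^ q"
proof -
  interpret P: prob_space P
    using assms(5) by (simp add: rand_sq_estimates_def)
  have "\<forall>s\<in>S. \<exists>D. D \<in> \<D> \<and> \<theta> D = s"
    using assms(7) by (auto simp: is_packing_def)
  then obtain Dof where Dof: "\<And>s. s \<in> S \<Longrightarrow> Dof s \<in> \<D> \<and> \<theta> (Dof s) = s"
    by metis
  define Orc where "Orc s = (\<lambda>hs. grid_round \<tau> (\<integral>x. last hs x \<partial>Dof s))" for s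
  define succ where
    "succ s = {c\<in>space P. \<rho> s (snd (A c) (sq_run (fst (A c)) (Orc s) q)) \<le> \<epsilon>}" for s
  have "\<exists>T\<in>P.events. T \<subseteq> succ s \<and> 1 - \<alpha> \<le> P.prob T" if "s \<in> S" for s
  proof -
    have D: "Dof s \<in> \<D>" and \<theta>: "\<theta> (Dof s) = s"
      using Dof[OF that] by auto
    have "stat_oracle \<tau> (Dof s) (Orc s)"
      using assms(1,4) D by (simp add: Orc_def stat_oracle_grid_round)
    from rand_sq_estimates_success_event[OF assms(5) D this] show ?thesis
      by (simp only: \<theta> succ_def)
  qed
  then obtain T where T: "\<And>s. s \<in> S \<Longrightarrow> T s \<in> P.events \<and> T s \<subseteq> succ s \<and> 1 - \<alpha> \<le> P.prob (T s)"
    by metis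
  have "card {s\<in>S. c \<in> T s} \<le> Suc (nat \<lfloor>1/\<tau>\<rfloor>) ^ q" if "c \<in> space P" for c
  proof -
    have "det_sq_alg q \<Theta> (fst (A c)) (snd (A c))"
      using assms(5) that by (simp add: rand_sq_estimates_def)
    then have "card {s\<in>S. \<rho> s (snd (A c) (sq_run (fst (A c)) (Orc s) q)) \<le> \<epsilon>}
        \<le> card (round_grid \<tau>) ^ q"
      using assms(2,3,7) finite_round_grid grid_round_in_round_grid
      by (intro card_sq_successes_le) (auto simp: Orc_def det_sq_alg_def)
    moreover have "card {s\<in>S. c \<in> T s}
        \<le> card {s\<in>S. \<rho> s (snd (A c) (sq_run (fst (A c)) (Orc s) q)) \<le> \<epsilon>}"
      using T assms(6) by (intro card_mono) (auto simp: succ_def)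
    moreover have "card (round_grid \<tau>) ^ q \<le> Suc (nat \<lfloor>1/\<tau>\<rfloor>) ^ q"
      using card_round_grid_le by (rule power_mono) simp
    ultimately show ?thesis
      by linarith
  qed
  then have "(\<Sum>s\<in>S. P.prob (T s)) \<le> real (Suc (nat \<lfloor>1/\<tau>\<rfloor>) ^ q)"
    using T assms(6) by (intro P.sum_prob_le_of_bounded_overlap) auto
  moreover have "(1 - \<alpha>) * real (card S) \<le> (\<Sum>s\<in>S. P.prob (T s))"
    using sum_mono[of S "\<lambda>_. 1 - \<alpha>" "\<lambda>s. P.prob (T s)"] T by (simp add: mult.commute)
  ultimately show ?thesis
    by simp
qed

lemma packing_number_attained:
  assumes "\<And>S. finite S \<Longrightarrow> is_packing M \<rho> \<epsilon> S \<Longrightarrow> card S \<le> N"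
  obtains S where "finite S" "is_packing M \<rho> \<epsilon> S" "packing_number M \<rho> \<epsilon> = enat (card S)"
proof -
  define X where "X = {card S | S. finite S \<and> is_packing M \<rho> \<epsilon> S}"
  have "finite X"
    using assms by (intro finite_subset[of X "{..N}"]) (auto simp: X_def)
  moreover have "0 \<in> X"
    unfolding X_def by (rule CollectI, rule exI[of _ "{}"]) (simp add: is_packing_def)
  ultimately have "Max X \<in> X" "\<forall>k\<in>X. k \<le> Max X"
    using Max_in by auto
  then obtain S where S: "finite S" "is_packing M \<rho> \<epsilon> S" "card S = Max X"
    unfolding X_def by auto
  have "packing_number M \<rho> \<epsilon> = enat (card S)"
    unfolding packing_number_def
  proof (rule antisym)
    show "Sup {enat (card S) |S. finite S \<and> is_packing M \<rho> \<epsilon> S} \<le> enat (card S)"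
      using \<open>\<forall>k\<in>X. k \<le> Max X\<close> S(3) by (intro Sup_least) (auto simp: X_def)
    show "enat (card S) \<le> Sup {enat (card S) |S. finite S \<and> is_packing M \<rho> \<epsilon> S}"
      using S(1,2) by (intro Sup_upper) blast
  qed
  with S(1,2) show ?thesis
    by (rule that)
qed

theorem theoremH3:
  fixes \<D> :: "(real^'n) measure set" and \<Theta> :: "'b set" and \<rho> :: "'b \<Rightarrow> 'b \<Rightarrow> real"
    and \<theta> :: "(real^'n) measure \<Rightarrow> 'b" and \<tau> \<epsilon> \<alpha> :: real and q :: nat
    and P :: "'c measure" and A :: "'c \<Rightarrow> (real list \<Rightarrow> (real^'n \<Rightarrow> real)) \<times> (real list \<Rightarrow> 'b)"
  assumes "\<forall>D\<in>\<D>. prob_space D \<and> sets D = sets borel"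
    and "Metric_space \<Theta> \<rho>"
    and "\<theta> ` \<D> \<subseteq> \<Theta>"
    and "\<tau> > 0" and "\<epsilon> > 0" and "0 \<le> \<alpha>" and "\<alpha> < 1"
    and "rand_sq_estimates q \<tau> \<Theta> \<rho> \<D> \<theta> \<epsilon> \<alpha> P A"
  shows "packing_number (\<theta> ` \<D>) \<rho> \<epsilon> \<noteq> \<infinity> \<and>
    (let K = (1 - \<alpha>) * real (the_enat (packing_number (\<theta> ` \<D>) \<rho> \<epsilon>));
         B = 1 + real_of_int \<lfloor>1 / \<tau>\<rfloor>
     in (0 < K \<longrightarrow> ln K \<le> real q * ln B) \<and>
        (0 < K \<and> \<tau> \<le> 1 \<longrightarrow> ln K / ln B \<le> real q))"
proof -
  define B where "B = 1 + real_of_int \<lfloor>1 / \<tau>\<rfloor>"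
  have B: "B = real (Suc (nat \<lfloor>1/\<tau>\<rfloor>))"
    using assms(4) by (simp add: B_def)
  note bound = rand_sq_estimates_packing_bound[OF assms(1-4,8), folded B]
  have "card S \<le> nat \<lceil>B ^ q / (1 - \<alpha>)\<rceil>" if "finite S" "is_packing (\<theta> ` \<D>) \<rho> \<epsilon> S" for S
  proof -
    have "real (card S) \<le> B ^ q / (1 - \<alpha>)"
      using bound[OF that] assms(7) by (simp add: field_simps)
    then show ?thesis
      by linarith
  qed
  then obtain S where S: "finite S" "is_packing (\<theta> ` \<D>) \<rho> \<epsilon> S"
    and pn: "packing_number (\<theta> ` \<D>) \<rho> \<epsilon> = enat (card S)"
    by (rule packing_number_attained)
  define K where "K = (1 - \<alpha>) * real (card S)"
  have log_bound: "ln K \<le> real q * ln B" if "0 < K"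
    using bound[OF S] that B by (simp add: K_def ln_realpow[symmetric])
  have "0 < ln B" if "\<tau> \<le> 1"
  proof -
    have "1 \<le> 1 / \<tau>"
      using that assms(4) by simp
    then have "1 \<le> \<lfloor>1 / \<tau>\<rfloor>"
      by (simp add: le_floor_iff)
    then have "1 < B"
      unfolding B_def by linarith
    then show ?thesis
      by simp
  qed
  then show ?thesis
    using log_bound by (simp add: pn K_def[symmetric] B_def[symmetric] pos_divide_le_eq)
qed

end
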